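(* Let $C$ be a binary linear $[n,k]$ code (a $k$-dimensional subspace of $\mathbb{F}_2^n$) whose hull $\mathrm{Hull}(C)=C\cap C^{\perp}$ has dimension $\ell$, where $0\le \ell\le k$. Let $G$ be a $k\times n$ generator matrix of $C$ with rows $\mathbf r_1,\dots,\mathbf r_k$, and let $H$ be an $(n-k)\times n$ parity check matrix of $C$ with rows $\mathbf s_1,\dots,\mathbf s_{n-k}$. Suppose $\mathbf x=(x_1,\dots,x_n)\in\mathbb{F}_2^n$ satisfies $\mathbf x\cdot\mathbf x=1$. Put $y_i=\mathbf x\cdot \mathbf r_i$ for $1\le i\le k$ and $z_j=\mathbf x\cdot\mathbf s_j$ for $1\le j\le n-k$. Then: (a) the matrix \[ G_1=\begin{bmatrix} 1 & 0 & x_1\ \cdots\ x_n\\ y_1 & y_1 & \mathbf r_1\\ \vdots & \vdots & \vdots\\ y_k & y_k & \mathbf r_k\end{bmatrix} \] generates a binary linear $[n+2,k+1]$ code $C_1$ whose hull has dimension $\ell+1$; (b) the matrix \[ H_1=\begin{bmatrix} 1 & 0 & x_1\ \cdots\ x_n\\ z_1 & z_1 & \mathbf s_1\\ \vdots & \vdots & \vdots\\ z_{n-k} & z_{n-k} & \mathbf s_{n-k}\end{bmatrix} \] is a parity check matrix for $C_1$.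
   Context: All codes are binary linear codes, with the dual $C^{\perp}=\{\mathbf u\in\mathbb F_2^n : \mathbf u\cdot\mathbf c=0 \text{ for all } \mathbf c\in C\}$ taken with respect to the standard dot product. The hull of $C$ is $\mathrm{Hull}(C)=C\cap C^{\perp}$. A parity check matrix of $C$ is a generator matrix of $C^{\perp}$. The code $C_1$ is called Construction I. *)

theory Defs
  imports "HOL-Library.Z2"
begin

text \<open>Binary vectors of length n: functions nat => bit vanishing outside positions 0..n-1.
  A k x n matrix over F_2 is given by its rows r :: nat => (nat => bit), rows indexed 0..k-1.\<close>

definition vecs :: "nat \<Rightarrow> (nat \<Rightarrow> bit) set" where
  "vecs n = {v. \<forall>i\<ge>n. v i = 0}"

definition dot :: "nat \<Rightarrow> (nat \<Rightarrow> bit) \<Rightarrow> (nat \<Rightarrow> bit) \<Rightarrow> bit" where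
  "dot n u v = (\<Sum>i<n. u i * v i)"

definition linear_code :: "nat \<Rightarrow> (nat \<Rightarrow> bit) set \<Rightarrow> bool" where
  "linear_code n C \<longleftrightarrow> C \<subseteq> vecs n \<and> (\<lambda>_. 0) \<in> C \<and>
     (\<forall>u\<in>C. \<forall>v\<in>C. (\<lambda>i. u i + v i) \<in> C) \<and> (\<forall>a. \<forall>u\<in>C. (\<lambda>i. a * u i) \<in> C)"

definition dual :: "nat \<Rightarrow> (nat \<Rightarrow> bit) set \<Rightarrow> (nat \<Rightarrow> bit) set" where
  "dual n C = {u \<in> vecs n. \<forall>c\<in>C. dot n u c = 0}"

definition hull :: "nat \<Rightarrow> (nat \<Rightarrow> bit) set \<Rightarrow> (nat \<Rightarrow> bit) set" where
  "hull n C = C \<inter> dual n C"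

definition lincomb :: "nat \<Rightarrow> (nat \<Rightarrow> nat \<Rightarrow> bit) \<Rightarrow> (nat \<Rightarrow> bit) \<Rightarrow> (nat \<Rightarrow> bit)" where
  "lincomb m r c = (\<lambda>j. \<Sum>i<m. c i * r i j)"

definition row_space :: "nat \<Rightarrow> (nat \<Rightarrow> nat \<Rightarrow> bit) \<Rightarrow> (nat \<Rightarrow> bit) set" where
  "row_space m r = {lincomb m r c | c. True}"

definition lin_indep :: "nat \<Rightarrow> (nat \<Rightarrow> nat \<Rightarrow> bit) \<Rightarrow> bool" where
  "lin_indep m r \<longleftrightarrow> (\<forall>c. lincomb m r c = (\<lambda>_. 0) \<longrightarrow> (\<forall>i<m. c i = 0))"

definition gen_matrix :: "nat \<Rightarrow> (nat \<Rightarrow> bit) set \<Rightarrow> nat \<Rightarrow> (nat \<Rightarrow> nat \<Rightarrow> bit) \<Rightarrow> bool" where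
  "gen_matrix n C m r \<longleftrightarrow> (\<forall>i<m. r i \<in> vecs n) \<and> lin_indep m r \<and> C = row_space m r"

definition parity_check_matrix :: "nat \<Rightarrow> (nat \<Rightarrow> bit) set \<Rightarrow> nat \<Rightarrow> (nat \<Rightarrow> nat \<Rightarrow> bit) \<Rightarrow> bool" where
  "parity_check_matrix n C m h \<longleftrightarrow> gen_matrix n (dual n C) m h"

definition has_dim :: "nat \<Rightarrow> (nat \<Rightarrow> bit) set \<Rightarrow> nat \<Rightarrow> bool" where
  "has_dim n V d \<longleftrightarrow> (\<exists>b. gen_matrix n V d b)"

text \<open>The matrix obtained by prepending the row (1,0,x_1..x_n) and, for each row v_i,
  two columns with entry x . v_i: new row 0 is (1,0,x), new row i+1 is (w_i, w_i, v_i).\<close>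
definition ext_matrix :: "nat \<Rightarrow> (nat \<Rightarrow> bit) \<Rightarrow> (nat \<Rightarrow> nat \<Rightarrow> bit) \<Rightarrow> (nat \<Rightarrow> nat \<Rightarrow> bit)" where
  "ext_matrix n x v = (\<lambda>i j.
     if i = 0 then (if j = 0 then 1 else if j = 1 then 0 else x (j - 2))
     else (if j \<le> 1 then dot n x (v (i - 1)) else v (i - 1) (j - 2)))"

end

theory Submission
  imports Defs
begin

text \<open>Write \<open>\<phi>(a, g) = a (1, 0, x) + (x \<cdot> g, x \<cdot> g, g)\<close> for \<open>a \<in> F\<^sub>2\<close> and \<open>g \<in> F\<^sub>2\<^sup>n\<close>. The rows
  of the extended matrix are \<open>\<phi>(1, 0)\<close> and \<open>\<phi>(0, r\<^sub>i)\<close>, so by linearity the code it spans is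
  \<open>\<phi>(F\<^sub>2 \<times> V)\<close>, where \<open>V\<close> is the row space of the original matrix. The map \<open>\<phi>\<close> is injective
  and, because \<open>x \<cdot> x = 1\<close>, satisfies \<open>\<phi>(a, g) \<cdot> \<phi>(b, h) = g \<cdot> h\<close>. Moreover every vector
  orthogonal to \<open>(1, 0, x)\<close> lies in the image of \<open>\<phi>\<close>. Hence taking duals, and then hulls,
  commutes with \<open>V \<mapsto> \<phi>(F\<^sub>2 \<times> V)\<close>, and extending a basis of a code gives a basis of
  the extended code; applied to \<open>C\<close>, \<open>C\<^sup>\<perp>\<close> and \<open>Hull(C)\<close> this gives all claims.\<close>

text \<open>Bit arithmetic is kept in ring form, so that \<open>algebra_simps\<close> applies.\<close>
declare add_bit_eq_xor[simp del] mult_bit_eq_and[simp del]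

lemma bit_add_self [simp]: "(a::bit) + a = 0"
  by (cases a) simp_all

lemma dot_commute: "dot n u v = dot n v u"
  unfolding dot_def by (simp add: mult.commute)

lemma dot_Suc_Suc:
  "dot (Suc (Suc n)) u v = u 0 * v 0 + u 1 * v 1 + dot n (\<lambda>j. u (j + 2)) (\<lambda>j. v (j + 2))"
  unfolding dot_def sum.lessThan_Suc_shift by (simp add: add.assoc numeral_2_eq_2)

lemma dot_lincomb: "dot n x (lincomb m r c) = (\<Sum>i<m. c i * dot n x (r i))"
  unfolding dot_def lincomb_def
  by (simp add: sum_distrib_left sum_distrib_right sum.swap[of _ "{..<n}"] algebra_simps)

lemma lincomb_in_vecs: "\<forall>i<m. r i \<in> vecs n \<Longrightarrow> lincomb m r c \<in> vecs n"
  by (auto simp: vecs_def lincomb_def)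

lemma linear_code_row_space:
  assumes rows: "\<forall>i<m. r i \<in> vecs n"
  shows "linear_code n (row_space m r)"
  unfolding linear_code_def
proof (intro conjI ballI allI)
  show "row_space m r \<subseteq> vecs n"
    using lincomb_in_vecs[OF rows] by (auto simp: row_space_def)
  show "(\<lambda>_. 0) \<in> row_space m r" unfolding row_space_def
    by (intro CollectI exI[of _ "\<lambda>_. 0"]) (simp add: lincomb_def)
next
  fix u v assume "u \<in> row_space m r" "v \<in> row_space m r"
  then obtain c d where "u = lincomb m r c" "v = lincomb m r d" unfolding row_space_def by blast
  then have "(\<lambda>i. u i + v i) = lincomb m r (\<lambda>i. c i + d i)"
    by (simp add: lincomb_def sum.distrib algebra_simps)
  then show "(\<lambda>i. u i + v i) \<in> row_space m r" unfolding row_space_def by blast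
next
  fix a u assume "u \<in> row_space m r"
  then obtain c where "u = lincomb m r c" unfolding row_space_def by blast
  then have "(\<lambda>i. a * u i) = lincomb m r (\<lambda>i. a * c i)"
    by (simp add: lincomb_def sum_distrib_left algebra_simps)
  then show "(\<lambda>i. a * u i) \<in> row_space m r" unfolding row_space_def by blast
qed

definition ext_vec :: "nat \<Rightarrow> (nat \<Rightarrow> bit) \<Rightarrow> bit \<Rightarrow> (nat \<Rightarrow> bit) \<Rightarrow> (nat \<Rightarrow> bit)" where
  "ext_vec n x a g = (\<lambda>j. if j = 0 then a + dot n x g else if j = 1 then dot n x g
                          else a * x (j - 2) + g (j - 2))"

definition ext_code :: "nat \<Rightarrow> (nat \<Rightarrow> bit) \<Rightarrow> (nat \<Rightarrow> bit) set \<Rightarrow> (nat \<Rightarrow> bit) set" where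
  "ext_code n x V = {ext_vec n x a g | a g. g \<in> V}"

lemma ext_vec_inject: "ext_vec n x a g = ext_vec n x b h \<longleftrightarrow> a = b \<and> g = h"
proof
  assume eq: "ext_vec n x a g = ext_vec n x b h"
  have dot_eq: "dot n x g = dot n x h" using fun_cong[OF eq, of 1] by (simp add: ext_vec_def)
  have "a = b" using fun_cong[OF eq, of 0] dot_eq by (simp add: ext_vec_def)
  moreover have "g j = h j" for j
    using fun_cong[OF eq, of "j + 2"] \<open>a = b\<close> by (simp add: ext_vec_def)
  ultimately show "a = b \<and> g = h" by auto
qed simp

lemma ext_vec_eq_zero_iff: "ext_vec n x a g = (\<lambda>_. 0) \<longleftrightarrow> a = 0 \<and> g = (\<lambda>_. 0)"
proof -
  have "ext_vec n x 0 (\<lambda>_. 0) = (\<lambda>_. 0)" by (auto simp: ext_vec_def dot_def)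
  then show ?thesis using ext_vec_inject by metis
qed

lemma ext_vec_in_vecs_iff:
  "x \<in> vecs n \<Longrightarrow> ext_vec n x a g \<in> vecs (n + 2) \<longleftrightarrow> g \<in> vecs n"
  by (auto simp: vecs_def ext_vec_def dest: spec[where x = "_ + 2"])

lemma dot_ext_vec:
  assumes "dot n x x = 1"
  shows "dot (n + 2) (ext_vec n x a g) (ext_vec n x b h) = dot n g h"
proof -
  have tail: "dot n (\<lambda>j. a * x j + g j) (\<lambda>j. b * x j + h j)
      = a * b * dot n x x + a * dot n x h + b * dot n x g + dot n g h"
    unfolding dot_def by (simp add: algebra_simps sum.distrib sum_distrib_left)
  have "dot (n + 2) (ext_vec n x a g) (ext_vec n x b h)
     = (a + dot n x g) * (b + dot n x h) + dot n x g * dot n x h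
       + (a * b * dot n x x + a * dot n x h + b * dot n x g + dot n g h)"
    unfolding add_2_eq_Suc' dot_Suc_Suc tail[symmetric] by (simp add: ext_vec_def)
  also have "\<dots> = dot n g h"
    using assms by (cases a; cases b; cases "dot n x g"; cases "dot n x h"; simp add: algebra_simps)
  finally show ?thesis .
qed

text \<open>The preimage of \<open>v\<close> is \<open>a = v\<^sub>0 + v\<^sub>1\<close> and \<open>g = (v\<^sub>2, \<dots>, v\<^sub>n\<^sub>+\<^sub>1) + a x\<close>; orthogonality
  to \<open>\<phi>(1, 0) = (1, 0, x)\<close> is what makes \<open>x \<cdot> g = v\<^sub>1\<close>.\<close>
lemma ext_vec_surj_orthogonal:
  assumes xx: "dot n x x = 1"
    and orth: "dot (n + 2) v (ext_vec n x 1 (\<lambda>_. 0)) = 0"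
  obtains a g where "v = ext_vec n x a g"
proof -
  define w where "w = (\<lambda>j. v (j + 2))"
  define a where "a = v 0 + v 1"
  define g where "g = (\<lambda>j. w j + a * x j)"
  have orth': "v 0 + dot n x w = 0"
    using orth unfolding w_def add_2_eq_Suc' dot_Suc_Suc
    by (simp add: ext_vec_def dot_def mult.commute)
  have "dot n x g = dot n x w + a"
    unfolding g_def dot_def using xx
    by (simp add: algebra_simps sum.distrib sum_distrib_left[symmetric] dot_def)
  then have dot_g: "dot n x g = v 1"
    using orth' unfolding a_def by (cases "v 0"; cases "v 1"; cases "dot n x w"; simp)
  have "v j = ext_vec n x a g j" for j
  proof (cases "j \<le> 1")
    case True
    then show ?thesis using dot_g unfolding ext_vec_def a_def
      by (cases "v 0"; cases "v 1"; auto simp: le_Suc_eq)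
  next
    case False
    then have "Suc (Suc (j - 2)) = j" by arith
    then show ?thesis using False unfolding ext_vec_def g_def w_def by (auto simp: algebra_simps)
  qed
  then show thesis using that by blast
qed

lemma ext_code_Int: "ext_code n x A \<inter> ext_code n x B = ext_code n x (A \<inter> B)"
  unfolding ext_code_def by (auto simp: ext_vec_inject)

lemma dual_ext_code:
  assumes x: "x \<in> vecs n" and xx: "dot n x x = 1" and zero: "(\<lambda>_. 0) \<in> V"
  shows "dual (n + 2) (ext_code n x V) = ext_code n x (dual n V)"
proof
  show "dual (n + 2) (ext_code n x V) \<subseteq> ext_code n x (dual n V)"
  proof
    fix v assume v: "v \<in> dual (n + 2) (ext_code n x V)"
    have "ext_vec n x 1 (\<lambda>_. 0) \<in> ext_code n x V" using zero unfolding ext_code_def by blast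
    with v have "dot (n + 2) v (ext_vec n x 1 (\<lambda>_. 0)) = 0" unfolding dual_def by blast
    then obtain a g where v_eq: "v = ext_vec n x a g" using ext_vec_surj_orthogonal[OF xx] by blast
    have "g \<in> vecs n" using v ext_vec_in_vecs_iff[OF x] unfolding v_eq dual_def by blast
    moreover have "dot n g h = 0" if "h \<in> V" for h
    proof -
      have "ext_vec n x 0 h \<in> ext_code n x V" using that unfolding ext_code_def by blast
      with v have "dot (n + 2) v (ext_vec n x 0 h) = 0" unfolding dual_def by blast
      then show ?thesis unfolding v_eq dot_ext_vec[OF xx] .
    qed
    ultimately have "g \<in> dual n V" unfolding dual_def by blast
    then show "v \<in> ext_code n x (dual n V)" unfolding ext_code_def v_eq by blast
  qed
next
  show "ext_code n x (dual n V) \<subseteq> dual (n + 2) (ext_code n x V)"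
  proof
    fix v assume "v \<in> ext_code n x (dual n V)"
    then obtain a h where v: "v = ext_vec n x a h" and h: "h \<in> dual n V"
      unfolding ext_code_def by blast
    have "v \<in> vecs (n + 2)" using h ext_vec_in_vecs_iff[OF x] unfolding v dual_def by blast
    moreover have "dot (n + 2) v w = 0" if "w \<in> ext_code n x V" for w
      using that h unfolding v ext_code_def dual_def by (auto simp: dot_ext_vec[OF xx, unfolded add_2_eq_Suc'])
    ultimately show "v \<in> dual (n + 2) (ext_code n x V)" unfolding dual_def by blast
  qed
qed

lemma hull_ext_code:
  assumes "x \<in> vecs n" and "dot n x x = 1" and "(\<lambda>_. 0) \<in> V"
  shows "hull (n + 2) (ext_code n x V) = ext_code n x (hull n V)"
  unfolding hull_def dual_ext_code[OF assms] ext_code_Int ..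

lemma lincomb_ext_matrix:
  "lincomb (Suc m) (ext_matrix n x r) c = ext_vec n x (c 0) (lincomb m r (\<lambda>i. c (Suc i)))"
proof
  fix j
  show "lincomb (Suc m) (ext_matrix n x r) c j = ext_vec n x (c 0) (lincomb m r (\<lambda>i. c (Suc i))) j"
    unfolding lincomb_def[of "Suc m"] sum.lessThan_Suc_shift ext_vec_def
    by (auto simp add: dot_lincomb[unfolded lincomb_def] ext_matrix_def lincomb_def)
qed

lemma row_space_ext_matrix:
  "row_space (Suc m) (ext_matrix n x r) = ext_code n x (row_space m r)"
proof
  show "row_space (Suc m) (ext_matrix n x r) \<subseteq> ext_code n x (row_space m r)"
    unfolding row_space_def ext_code_def lincomb_ext_matrix by blast
next
  show "ext_code n x (row_space m r) \<subseteq> row_space (Suc m) (ext_matrix n x r)"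
  proof
    fix v assume "v \<in> ext_code n x (row_space m r)"
    then obtain a c where v: "v = ext_vec n x a (lincomb m r c)"
      unfolding ext_code_def row_space_def by blast
    have "v = lincomb (Suc m) (ext_matrix n x r) (\<lambda>i. if i = 0 then a else c (i - 1))"
      unfolding lincomb_ext_matrix v by simp
    then show "v \<in> row_space (Suc m) (ext_matrix n x r)" unfolding row_space_def by blast
  qed
qed

lemma lin_indep_ext_matrix:
  assumes "lin_indep m r"
  shows "lin_indep (Suc m) (ext_matrix n x r)"
  unfolding lin_indep_def
proof (intro allI impI)
  fix c i
  assume "lincomb (Suc m) (ext_matrix n x r) c = (\<lambda>_. 0)" and "i < Suc m"
  then have "c 0 = 0" and "lincomb m r (\<lambda>i. c (Suc i)) = (\<lambda>_. 0)"
    unfolding lincomb_ext_matrix ext_vec_eq_zero_iff by simp_all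
  with assms \<open>i < Suc m\<close> show "c i = 0"
    unfolding lin_indep_def by (cases i) auto
qed

lemma ext_matrix_in_vecs:
  "x \<in> vecs n \<Longrightarrow> \<forall>i<m. r i \<in> vecs n \<Longrightarrow> \<forall>i<Suc m. ext_matrix n x r i \<in> vecs (n + 2)"
  by (auto simp: vecs_def ext_matrix_def less_Suc_eq_0_disj)

lemma gen_matrix_ext_matrix:
  "x \<in> vecs n \<Longrightarrow> gen_matrix n V m r \<Longrightarrow>
     gen_matrix (n + 2) (ext_code n x V) (Suc m) (ext_matrix n x r)"
  unfolding gen_matrix_def using ext_matrix_in_vecs lin_indep_ext_matrix row_space_ext_matrix
  by metis

theorem theorem1:
  fixes n k l :: nat and C :: "(nat \<Rightarrow> bit) set"
    and G H :: "nat \<Rightarrow> nat \<Rightarrow> bit" and x :: "nat \<Rightarrow> bit"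
  assumes "k \<le> n" and "linear_code n C" and "has_dim n C k"
    and "has_dim n (hull n C) l" and "l \<le> k"
    and "gen_matrix n C k G"
    and "parity_check_matrix n C (n - k) H"
    and "x \<in> vecs n" and "dot n x x = 1"
  shows "let G1 = ext_matrix n x G; H1 = ext_matrix n x H; C1 = row_space (k + 1) G1 in
           linear_code (n + 2) C1 \<and> gen_matrix (n + 2) C1 (k + 1) G1 \<and>
           has_dim (n + 2) (hull (n + 2) C1) (l + 1) \<and>
           parity_check_matrix (n + 2) C1 (n - k + 1) H1"
proof -
  note x = \<open>x \<in> vecs n\<close> and xx = \<open>dot n x x = 1\<close>
  have zero: "(\<lambda>_. 0) \<in> C" using \<open>linear_code n C\<close> unfolding linear_code_def by blast
  have G1: "gen_matrix (n + 2) (ext_code n x C) (Suc k) (ext_matrix n x G)"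
    using gen_matrix_ext_matrix[OF x \<open>gen_matrix n C k G\<close>] .
  then have C1: "row_space (k + 1) (ext_matrix n x G) = ext_code n x C"
    unfolding gen_matrix_def by simp
  have "linear_code (n + 2) (ext_code n x C)"
    using G1 linear_code_row_space unfolding gen_matrix_def by metis
  moreover obtain B where "gen_matrix n (hull n C) l B"
    using \<open>has_dim n (hull n C) l\<close> unfolding has_dim_def by blast
  then have "has_dim (n + 2) (hull (n + 2) (ext_code n x C)) (l + 1)"
    unfolding hull_ext_code[OF x xx zero] has_dim_def using gen_matrix_ext_matrix[OF x] by auto
  moreover have "parity_check_matrix (n + 2) (ext_code n x C) (n - k + 1) (ext_matrix n x H)"
    using gen_matrix_ext_matrix[OF x \<open>parity_check_matrix n C (n - k) H\<close>[unfolded parity_check_matrix_def]]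
    unfolding parity_check_matrix_def dual_ext_code[OF x xx zero] by simp
  ultimately show ?thesis unfolding Let_def C1 using G1 by simp
qed

end
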